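(* For $\tau=u+iv$ in the upper half-plane $\mathbb{H}$, with $q=e^{2\pi i\tau}$, define \[ H(q):=\sum_{n\ge 0}(-1)^nq^{3n^2+2n}\left(1+q^{2n+1}\right)\sum_{|j|\le n}(-1)^{j}q^{-j^2}, \] \[ H^{-}(\tau):=-\frac{1}{\sqrt{\pi}}\sum_{\varepsilon\in\{0,1\}}(-1)^{\varepsilon}\sum_{n,r\in \mathbb{Z}}\operatorname{sgn}\!\left(2r+\varepsilon+\tfrac 13\right)\Gamma\!\left(\tfrac 12,6\pi\left(2r+\varepsilon+\tfrac 13\right)^2v\right)q^{-\frac 32\left(2r+\varepsilon+\frac 13\right)^2+\frac 12\left(2n+\varepsilon+1\right)^2}, \] and $\widehat{H}(\tau):=q^{\frac13}H(q)+H^{-}(\tau)$. Let $Q(\mathbf{n}):=3n_1^2-n_2^2$ for $\mathbf{n}=(n_1,n_2)^T\in\mathbb{R}^2$, with associated bilinear form $B(\mathbf{x},\mathbf{y}):=Q(\mathbf{x}+\mathbf{y})-Q(\mathbf{x})-Q(\mathbf{y})=6x_1y_1-2x_2y_2$, and let $\mathbf{c_1}:=(1,3)^T$, $\mathbf{c_2}:=(-1,3)^T$, $\mathbf{a}:=(\frac13,0)^T$, $\mathbf{b}:=(\frac1{12},-\frac14)^T$. Define \[ \vartheta_{\mathbf{a},\mathbf{b}}(\tau):=\sum_{\mathbf{n}\in\mathbb{Z}^2+\mathbf{a}}\left(E\!\left(\frac{B(\mathbf{c_1},\mathbf{n})\sqrt v}{\sqrt{-Q(\mathbf{c_1})}}\right)-E\!\left(\frac{B(\mathbf{c_2},\mathbf{n})\sqrt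 v}{\sqrt{-Q(\mathbf{c_2})}}\right)\right)e^{2\pi i B(\mathbf{b},\mathbf{n})}q^{Q(\mathbf{n})}, \] where $E(w):=2\int_0^w e^{-\pi t^2}\,dt$. Then \[ \widehat{H}(\tau)=\frac{e^{-\frac{\pi i}{3}}}{2}\vartheta_{\mathbf{a},\mathbf{b}}(\tau). \]
   Context: For real $\alpha$, $q^{\alpha}:=e^{2\pi i\alpha\tau}$. $\Gamma(a,x):=\int_x^\infty e^{-t}t^{a-1}\,dt$ is the incomplete gamma function. $\operatorname{sgn}(x)=x/|x|$ for $x\ne0$ and $\operatorname{sgn}(0)=0$. Note $Q(\mathbf{c_1})=Q(\mathbf{c_2})=-6$. *)

theory Defs
  imports "HOL-Analysis.Analysis"
begin

definition qpow :: "complex \<Rightarrow> real \<Rightarrow> complex" where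
  "qpow \<tau> \<alpha> = exp (2 * complex_of_real pi * \<i> * complex_of_real \<alpha> * \<tau>)"

definition Gamma_inc :: "real \<Rightarrow> real \<Rightarrow> real" where
  "Gamma_inc a x = integral {x..} (\<lambda>t. exp (- t) * t powr (a - 1))"

definition Eerr :: "real \<Rightarrow> real" where
  "Eerr w = 2 * (LBINT t=0..w. exp (- pi * t\<^sup>2))"

definition H :: "complex \<Rightarrow> complex" where
  "H q = (\<Sum>n::nat. (-1) ^ n * q powi (3 * int n ^ 2 + 2 * int n) * (1 + q powi (2 * int n + 1))
            * (\<Sum>j\<in>{- int n..int n}. (-1) powi j * q powi (- (j ^ 2))))"

definition Hminus :: "complex \<Rightarrow> complex" where
  "Hminus \<tau> = - (1 / complex_of_real (sqrt pi)) *
     (\<Sum>\<epsilon>\<in>{0::int, 1}. (-1) powi \<epsilon> *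
        (\<Sum>\<^sub>\<infinity>(n, r)\<in>(UNIV :: (int \<times> int) set).
           complex_of_real (sgn (2 * of_int r + of_int \<epsilon> + 1/3)
             * Gamma_inc (1/2) (6 * pi * (2 * of_int r + of_int \<epsilon> + 1/3)\<^sup>2 * Im \<tau>))
           * qpow \<tau> (- 3/2 * (2 * of_int r + of_int \<epsilon> + 1/3)\<^sup>2
                     + 1/2 * (2 * of_int n + of_int \<epsilon> + 1)\<^sup>2)))"

definition Hhat :: "complex \<Rightarrow> complex" where
  "Hhat \<tau> = qpow \<tau> (1/3) * H (exp (2 * complex_of_real pi * \<i> * \<tau>)) + Hminus \<tau>"

definition Qf :: "real \<times> real \<Rightarrow> real" where
  "Qf x = 3 * (fst x)\<^sup>2 - (snd x)\<^sup>2"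

definition Bf :: "real \<times> real \<Rightarrow> real \<times> real \<Rightarrow> real" where
  "Bf x y = Qf (x + y) - Qf x - Qf y"

definition c1 :: "real \<times> real" where "c1 = (1, 3)"
definition c2 :: "real \<times> real" where "c2 = (-1, 3)"
definition avec :: "real \<times> real" where "avec = (1/3, 0)"
definition bvec :: "real \<times> real" where "bvec = (1/12, -1/4)"

definition theta_ab :: "complex \<Rightarrow> complex" where
  "theta_ab \<tau> = (\<Sum>\<^sub>\<infinity>(k1, k2)\<in>(UNIV :: (int \<times> int) set).
     (let n = (of_int k1, of_int k2) + avec in
       complex_of_real (Eerr (Bf c1 n * sqrt (Im \<tau>) / sqrt (- Qf c1))
                       - Eerr (Bf c2 n * sqrt (Im \<tau>) / sqrt (- Qf c2)))
       * exp (2 * complex_of_real pi * \<i> * complex_of_real (Bf bvec n))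
       * qpow \<tau> (Qf n)))"

end

theory Submission
  imports Defs
begin

(*
  Write n = (k1 + 1/3, k2) with (k1, k2) in Z^2. Then B(c1, n) = 6 (k1 - k2 + 1/3) and
  B(c2, n) = -6 (k1 + k2 + 1/3) are of the form +-(6m + 2) and never vanish, so the identity
  E(x) = sgn x (1 - beta(x^2)) with Zwegers' beta(y) = Gamma(1/2, pi y) / sqrt pi splits every term
  of the theta series into a holomorphic part (sgn + sgn) q^Q(n) and two beta-parts. The
  holomorphic part lives on the cones k1 >= |k2| and -k1 - 1 >= |k2|, and pairing (n, j) with
  (-n - 1, j) produces the n-th term of H. The two beta-parts are exchanged by k2 -> -k2, and the
  substitution (k1, k2) = (n - r, n - 3r - eps), eps in {0, 1}, turns either of them into H^-.
  Every part is bounded by C exp(-c (|k1| + |k2|)), which justifies all rearrangements.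
*)

section \<open>The error function and the incomplete gamma function\<close>

lemma Eerr_minus: "Eerr (- x) = - Eerr x"
proof -
  have "(LBINT t=0..- x. exp (- pi * t\<^sup>2)) = (LBINT t=0..- x. exp (- pi * (- t)\<^sup>2))"
    by simp
  also have "\<dots> = - (LBINT t=0..x. exp (- pi * t\<^sup>2))"
    by (subst interval_integral_reflect) (simp add: interval_integral_endpoints_reverse[of _ 0])
  finally show ?thesis
    unfolding Eerr_def by simp
qed

lemma Eerr_eq_integral:
  assumes "x \<ge> 0"
  shows "Eerr x = 2 * integral {0..x} (\<lambda>t. exp (- pi * t\<^sup>2))"
proof -
  have "(LBINT t=ereal 0..ereal x. exp (- pi * t\<^sup>2)) = integral {0..x} (\<lambda>t. exp (- pi * t\<^sup>2))"
    by (intro interval_integral_eq_integral assms borel_integrable_atLeastAtMost' continuous_intros)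
  then show ?thesis
    unfolding Eerr_def by (simp add: zero_ereal_def)
qed

lemma
  fixes a y :: real
  defines "f \<equiv> \<lambda>t. exp (- t) * t powr (a - 1)"
  assumes "a > 0" "y \<ge> 0"
  shows has_integral_Gamma_inc: "(f has_integral Gamma_inc a y) {y..}"
    and has_integral_Gamma_minus_Gamma_inc: "(f has_integral (Gamma a - Gamma_inc a y)) {0..y}"
proof -
  have f_nonneg: "f t \<ge> 0" for t
    unfolding f_def by simp
  have Gamma: "(f has_integral Gamma a) {0..}"
    using Gamma_integral_real[OF \<open>a > 0\<close>] unfolding f_def by (simp add: exp_minus field_simps)
  then have "f absolutely_integrable_on {0..}"
    by (intro nonnegative_absolutely_integrable_1 f_nonneg) auto
  then have "f absolutely_integrable_on {y..}" "f absolutely_integrable_on {0..y}"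
    using \<open>y \<ge> 0\<close> by (auto elim!: set_integrable_subset)
  then have "f integrable_on {y..}" "f integrable_on {0..y}"
    by (simp_all add: set_lebesgue_integral_eq_integral(1))
  then have tail: "(f has_integral Gamma_inc a y) {y..}"
    and initial: "(f has_integral integral {0..y} f) {0..y}"
    unfolding Gamma_inc_def f_def by auto
  have "negligible ({0..y} \<inter> {y..})"
    by (rule negligible_subset[of "{y}"]) auto
  with initial tail have "(f has_integral (integral {0..y} f + Gamma_inc a y)) ({0..y} \<union> {y..})"
    by (rule has_integral_Un)
  moreover have "{0..y} \<union> {y..} = {0..}"
    using \<open>y \<ge> 0\<close> by auto
  ultimately have "integral {0..y} f = Gamma a - Gamma_inc a y"
    using Gamma has_integral_unique by (metis add_diff_cancel_right')
  with tail initial show "(f has_integral Gamma_inc a y) {y..}"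
    "(f has_integral (Gamma a - Gamma_inc a y)) {0..y}"
    by simp_all
qed

lemma Gamma_inc_nonneg:
  assumes "a > 0" "y \<ge> 0"
  shows "Gamma_inc a y \<ge> 0"
  using has_integral_Gamma_inc[OF assms] by (rule has_integral_nonneg) simp

lemma Gamma_inc_le:
  assumes "0 < a" "a \<le> 1" "y > 0"
  shows "Gamma_inc a y \<le> y powr (a - 1) * exp (- y)"
proof -
  have "((\<lambda>t. y powr (a - 1) * exp (- 1 * t)) has_integral y powr (a - 1) * (exp (- 1 * y) / 1)) {y..}"
    by (intro has_integral_mult_right has_integral_exp_minus_to_infinity) simp
  with has_integral_Gamma_inc have "Gamma_inc a y \<le> y powr (a - 1) * (exp (- 1 * y) / 1)"
  proof (rule has_integral_le)
    fix t assume "t \<in> {y..}"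
    then have "t powr (a - 1) \<le> y powr (a - 1)"
      using assms by (intro powr_mono2') auto
    then show "exp (- t) * t powr (a - 1) \<le> y powr (a - 1) * exp (- 1 * t)"
      by (simp add: mult.commute)
  qed (use assms in auto)
  then show ?thesis
    by simp
qed

lemma has_integral_Gamma_half_initial:
  assumes "x \<ge> 0"
  shows "((\<lambda>t. exp (- t) * t powr (1/2 - 1) / (2 * sqrt pi)) has_integral
    integral {0..x} (\<lambda>s. exp (- pi * s\<^sup>2))) {0..pi * x\<^sup>2}"
proof -
  define g g' where "g t = sqrt (t / pi)" and "g' t = inverse (sqrt (t / pi)) / 2 / pi" for t
  have deriv: "(g has_field_derivative g' t) (at t within {0..pi * x\<^sup>2})" if "t \<in> {0..pi * x\<^sup>2} - {0}" for t
  proof -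
    have "t / pi > 0"
      using that by auto
    then show ?thesis
      unfolding g_def g'_def by (auto intro!: derivative_eq_intros)
  qed
  have image: "g ` {0..pi * x\<^sup>2} \<subseteq> {0..x}"
    using assms by (auto simp: g_def pos_divide_le_eq mult.commute intro!: real_le_lsqrt)
  have "((\<lambda>t. g' t *\<^sub>R exp (- pi * (g t)\<^sup>2)) has_integral
          integral {g 0..g (pi * x\<^sup>2)} (\<lambda>s. exp (- pi * s\<^sup>2))
          - integral {g (pi * x\<^sup>2)..g 0} (\<lambda>s. exp (- pi * s\<^sup>2))) {0..pi * x\<^sup>2}"
  proof (rule has_integral_substitution_general[where s="{0}", OF _ _ image _ _ deriv])
    show "continuous_on {0..pi * x\<^sup>2} g"
      unfolding g_def by (intro continuous_intros) auto
    show "continuous_on {0..x} (\<lambda>s. exp (- pi * s\<^sup>2))"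
      by (intro continuous_intros)
  qed auto
  moreover have "g 0 = 0" "g (pi * x\<^sup>2) = x"
    using assms by (simp_all add: g_def)
  moreover have "integral {x..0} (\<lambda>s. exp (- pi * s\<^sup>2)) = 0"
    using assms by (cases "x = 0") auto
  ultimately have "((\<lambda>t. g' t *\<^sub>R exp (- pi * (g t)\<^sup>2)) has_integral integral {0..x} (\<lambda>s. exp (- pi * s\<^sup>2)))
      {0..pi * x\<^sup>2}"
    by (simp only: diff_zero)
  moreover have "g' t *\<^sub>R exp (- pi * (g t)\<^sup>2) = exp (- t) * t powr (1/2 - 1) / (2 * sqrt pi)"
    if "t \<in> {0..pi * x\<^sup>2}" for t
  proof (cases "t = 0")
    case False
    with that have "t > 0"
      by simp
    then show ?thesis
      unfolding g_def g'_def by (simp add: powr_minus powr_half_sqrt real_sqrt_divide field_simps)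
  qed (simp add: g'_def)
  ultimately show ?thesis
    by (rule has_integral_eq[rotated])
qed

lemma has_integral_Gamma_half_Eerr:
  assumes "x \<ge> 0"
  shows "((\<lambda>t. exp (- t) * t powr (1/2 - 1)) has_integral sqrt pi * Eerr x) {0..pi * x\<^sup>2}"
proof -
  have "((\<lambda>t. 2 * sqrt pi * (exp (- t) * t powr (1/2 - 1) / (2 * sqrt pi))) has_integral
      2 * sqrt pi * integral {0..x} (\<lambda>s. exp (- pi * s\<^sup>2))) {0..pi * x\<^sup>2}"
    using has_integral_Gamma_half_initial[OF assms] by (rule has_integral_mult_right)
  then show ?thesis
    by (simp add: Eerr_eq_integral[OF assms] mult_ac)
qed

definition Zwegers_beta :: "real \<Rightarrow> real" where
  "Zwegers_beta x = Gamma_inc (1/2) (pi * x) / sqrt pi"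

lemma Eerr_eq_sgn_Zwegers_beta: "Eerr x = sgn x * (1 - Zwegers_beta (x\<^sup>2))"
proof -
  have pos: "Eerr x = 1 - Zwegers_beta (x\<^sup>2)" if "x > 0" for x
  proof -
    have "((\<lambda>t. exp (- t) * t powr (1/2 - 1)) has_integral Gamma (1/2) - Gamma_inc (1/2) (pi * x\<^sup>2))
        {0..pi * x\<^sup>2}"
      by (rule has_integral_Gamma_minus_Gamma_inc) auto
    with has_integral_Gamma_half_Eerr have "sqrt pi * Eerr x = Gamma (1/2) - Gamma_inc (1/2) (pi * x\<^sup>2)"
      using that by (meson has_integral_unique less_imp_le)
    then show ?thesis
      by (simp add: Zwegers_beta_def Gamma_one_half_real field_simps)
  qed
  consider "x > 0" | "x = 0" | "x < 0"
    by linarith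
  then show ?thesis
  proof cases
    case 1
    then show ?thesis
      by (simp add: pos)
  next
    case 2
    then show ?thesis
      by (simp add: Eerr_eq_integral)
  next
    case 3
    then show ?thesis
      using pos[of "- x"] Eerr_minus[of "- x"] by simp
  qed
qed

lemma Zwegers_beta_nonneg: "x \<ge> 0 \<Longrightarrow> Zwegers_beta x \<ge> 0"
  unfolding Zwegers_beta_def by (simp add: Gamma_inc_nonneg)

lemma Zwegers_beta_le:
  assumes "x > 0"
  shows "Zwegers_beta x \<le> exp (- pi * x) / (pi * sqrt x)"
proof -
  have "Gamma_inc (1/2) (pi * x) \<le> (pi * x) powr (1/2 - 1) * exp (- (pi * x))"
    using assms by (intro Gamma_inc_le) auto
  also have "\<dots> = sqrt pi * (exp (- pi * x) / (pi * sqrt x))"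
    using assms by (simp add: powr_minus powr_half_sqrt real_sqrt_mult field_simps)
  finally show ?thesis
    unfolding Zwegers_beta_def by (simp add: field_simps)
qed

section \<open>Sums over the integer lattice\<close>

lemma summable_on_exp_neg_abs_int:
  fixes c :: real
  assumes "c > 0"
  shows "(\<lambda>k::int. exp (- c * \<bar>of_int k\<bar>)) summable_on UNIV"
proof -
  let ?g = "\<lambda>k::int. exp (- c * \<bar>of_int k\<bar>)"
  have "summable (\<lambda>n. exp (- c) ^ n)"
    using assms by (intro summable_geometric) simp
  then have geom: "(\<lambda>n::nat. exp (- c * real n)) summable_on UNIV"
    by (simp add: summable_on_UNIV_nonneg_real_iff exp_of_nat_mult[symmetric] mult.commute)
  then have "?g summable_on range int"
    by (subst summable_on_reindex) (auto simp: o_def)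
  moreover have "(\<lambda>n::nat. ?g (- int n - 1)) summable_on UNIV"
    using geom by (rule summable_on_comparison_test) (use assms in auto)
  then have "?g summable_on range (\<lambda>n::nat. - int n - 1)"
    by (subst summable_on_reindex) (auto simp: o_def inj_on_def)
  moreover have "range int \<union> range (\<lambda>n::nat. - int n - 1) = UNIV"
    by (auto simp: image_iff) presburger
  ultimately show ?thesis
    by (metis summable_on_union)
qed

lemma summable_on_int_pair_exp_bound:
  fixes f :: "int \<times> int \<Rightarrow> 'a::banach"
  assumes "c > 0"
    and bound: "\<And>k1 k2. norm (f (k1, k2)) \<le> C * exp (- c * (\<bar>of_int k1\<bar> + \<bar>of_int k2\<bar>))"
  shows "f summable_on UNIV"
proof -
  let ?g = "\<lambda>k::int. exp (- c * \<bar>of_int k\<bar>)"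
  have "0 \<le> C"
    using order_trans[OF norm_ge_zero bound[of 0 0]] by simp
  have "(\<lambda>(k1, k2). C * ?g k1 * ?g k2) summable_on Sigma UNIV (\<lambda>_. UNIV)"
    by (rule summable_on_SigmaI[where g="\<lambda>k1. C * ?g k1 * infsum ?g UNIV"])
      (use \<open>0 \<le> C\<close> summable_on_exp_neg_abs_int[OF \<open>c > 0\<close>] in
        \<open>auto intro!: has_sum_cmult_right has_sum_infsum summable_on_cmult_left summable_on_cmult_right\<close>)
  then have majorant: "(\<lambda>(k1, k2). C * ?g k1 * ?g k2) summable_on UNIV"
    by simp
  have norm_le_majorant: "norm (f k) \<le> (\<lambda>(k1, k2). C * ?g k1 * ?g k2) k" for k
    using bound[of "fst k" "snd k"] by (simp add: case_prod_beta distrib_left mult.assoc exp_add[symmetric])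
  have "(\<lambda>k. norm (f k)) summable_on UNIV"
    using majorant norm_le_majorant by (rule summable_on_comparison_test) simp_all
  then show ?thesis
    by (rule abs_summable_summable)
qed

lemma has_sum_Sigma_finite_imp_sums:
  fixes f :: "nat \<times> 'b \<Rightarrow> 'a::{topological_comm_monoid_add, t3_space}"
  assumes "(f has_sum S) (Sigma UNIV B)" "\<And>n. finite (B n)"
  shows "(\<lambda>n. \<Sum>y\<in>B n. f (n, y)) sums S"
proof -
  have "((\<lambda>n. \<Sum>y\<in>B n. f (n, y)) has_sum S) UNIV"
    using assms(1) by (rule has_sum_SigmaD) (simp add: assms(2))
  then show ?thesis
    by (rule has_sum_imp_sums)
qed

lemma bij_apsnd_uminus: "bij (apsnd (uminus :: 'a::group_add \<Rightarrow> 'a) :: 'b \<times> 'a \<Rightarrow> _)"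
  by (rule o_bij[where g = "apsnd uminus"]) (auto simp: fun_eq_iff)

section \<open>Lattice estimates\<close>

lemma sgn_of_int_add_third: "sgn (real_of_int m + 1/3) = (if 0 \<le> m then 1 else - 1)"
proof -
  have "0 \<le> m \<longleftrightarrow> real_of_int m + 1/3 > 0" "m < 0 \<longleftrightarrow> real_of_int m + 1/3 < 0"
    by linarith+
  then show ?thesis
    by (auto simp: sgn_real_def)
qed

lemma sq_of_int_add_third_ge: "1/9 \<le> (real_of_int m + 1/3)\<^sup>2"
proof (cases "0 \<le> m")
  case True
  then have "(1/3)\<^sup>2 \<le> (real_of_int m + 1/3)\<^sup>2"
    by (intro power_mono) auto
  then show ?thesis
    by (simp add: power2_eq_square)
next
  case False
  then have "(2/3)\<^sup>2 \<le> (- (real_of_int m + 1/3))\<^sup>2"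
    by (intro power_mono) auto
  then show ?thesis
    unfolding power2_minus by (simp add: power2_eq_square)
qed

lemma abs_le_sq_add_quarter: "\<bar>x\<bar> \<le> x\<^sup>2 + 1/4" for x :: real
proof -
  have "0 \<le> (\<bar>x\<bar> - 1/2)\<^sup>2"
    by simp
  also have "\<dots> = x\<^sup>2 + 1/4 - \<bar>x\<bar>"
    by (simp add: power2_eq_square algebra_simps)
  finally show ?thesis
    by simp
qed

text \<open>For n = k + a one has B(c1, n) = 6 lin_minus k, B(c2, n) = -6 lin_plus k and Q(n) = Q_lat k.\<close>

fun lin_minus :: "int \<times> int \<Rightarrow> real" where
  "lin_minus (k1, k2) = of_int (k1 - k2) + 1/3"

fun lin_plus :: "int \<times> int \<Rightarrow> real" where
  "lin_plus (k1, k2) = of_int (k1 + k2) + 1/3"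

fun Q_lat :: "int \<times> int \<Rightarrow> real" where
  "Q_lat (k1, k2) = 3 * (of_int k1 + 1/3)\<^sup>2 - (of_int k2)\<^sup>2"

lemma lin_minus_pos_iff: "0 < lin_minus (k1, k2) \<longleftrightarrow> k2 \<le> k1"
  and lin_minus_neg_iff: "lin_minus (k1, k2) < 0 \<longleftrightarrow> k1 < k2"
  and lin_plus_pos_iff: "0 < lin_plus (k1, k2) \<longleftrightarrow> - k2 \<le> k1"
  and lin_plus_neg_iff: "lin_plus (k1, k2) < 0 \<longleftrightarrow> k1 < - k2"
  by auto

lemma Q_lat_ge_of_same_sign:
  assumes "0 < lin_minus (k1, k2) * lin_plus (k1, k2)"
  shows "(\<bar>of_int k1\<bar> + \<bar>of_int k2\<bar>) / 2 - 1 \<le> Q_lat (k1, k2)"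
proof -
  define t b where "t = real_of_int k1 + 1/3" and "b = real_of_int k2"
  have Q: "Q_lat (k1, k2) = 3 * t\<^sup>2 - b\<^sup>2"
    by (simp add: t_def b_def)
  have "lin_minus (k1, k2) * lin_plus (k1, k2) = t\<^sup>2 - b\<^sup>2"
    by (simp add: t_def b_def power2_eq_square algebra_simps)
  with assms have "b\<^sup>2 \<le> t\<^sup>2" "\<bar>b\<bar> \<le> \<bar>t\<bar>"
    by (simp_all add: abs_le_square_iff)
  moreover have "\<bar>of_int k1\<bar> \<le> \<bar>t\<bar> + 1/3" "\<bar>t\<bar> \<le> t\<^sup>2 + 1/4" "0 \<le> t\<^sup>2"
    by (simp_all add: t_def abs_le_sq_add_quarter)
  ultimately show ?thesis
    unfolding Q b_def[symmetric] by argo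
qed

lemma Q_lat_add_lin_minus_ge:
  "(\<bar>of_int k1\<bar> + \<bar>of_int k2\<bar>) / 4 - 1/4 \<le> 3 * (lin_minus (k1, k2))\<^sup>2 + Q_lat (k1, k2)"
proof -
  define t b where "t = real_of_int k1 + 1/3" and "b = real_of_int k2"
  have "3 * (lin_minus (k1, k2))\<^sup>2 + Q_lat (k1, k2) = (t\<^sup>2 + b\<^sup>2) / 4 + (23 * t - 12 * b)\<^sup>2 / 92 + 17 / 92 * b\<^sup>2"
    by (simp add: t_def b_def power2_eq_square field_simps)
  moreover have "0 \<le> (23 * t - 12 * b)\<^sup>2 / 92 + 17 / 92 * b\<^sup>2"
    by simp
  moreover have "\<bar>t\<bar> \<le> t\<^sup>2 + 1/4" "\<bar>b\<bar> \<le> b\<^sup>2 + 1/4" "\<bar>of_int k1\<bar> \<le> \<bar>t\<bar> + 1/3"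
    by (simp_all add: t_def abs_le_sq_add_quarter)
  ultimately show ?thesis
    unfolding b_def[symmetric] by argo
qed

section \<open>Splitting the theta series\<close>

lemma qpow_add: "qpow \<tau> (a + b) = qpow \<tau> a * qpow \<tau> b"
  unfolding qpow_def by (simp add: algebra_simps exp_add[symmetric])

lemma norm_qpow: "norm (qpow \<tau> a) = exp (- 2 * pi * a * Im \<tau>)"
  unfolding qpow_def by (simp add: norm_exp_eq_Re)

lemma power_int_qpow: "exp (2 * complex_of_real pi * \<i> * \<tau>) powi k = qpow \<tau> (of_int k)"
  unfolding qpow_def exp_power_int by (simp add: algebra_simps)

definition zeta6 :: complex where
  "zeta6 = exp (complex_of_real pi * \<i> / 3)"

lemma norm_zeta6 [simp]: "norm zeta6 = 1"
  unfolding zeta6_def by (simp add: norm_exp_eq_Re)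

lemma exp_two_pi_i_half_int_add_sixth:
  "exp (2 * complex_of_real pi * \<i> * complex_of_real (of_int m / 2 + 1/6)) = (-1) powi m * zeta6"
proof -
  have "2 * complex_of_real pi * \<i> * complex_of_real (of_int m / 2 + 1/6)
      = of_int m * (complex_of_real pi * \<i>) + complex_of_real pi * \<i> / 3"
    by (simp add: field_simps)
  then show ?thesis
    unfolding zeta6_def by (simp add: exp_add exp_power_int[symmetric])
qed

definition theta_weight :: "complex \<Rightarrow> int \<times> int \<Rightarrow> complex" where
  "theta_weight \<tau> k = (-1) powi (fst k + snd k) * zeta6 * qpow \<tau> (Q_lat k)"

definition theta_hol :: "complex \<Rightarrow> int \<times> int \<Rightarrow> complex" where
  "theta_hol \<tau> k = of_real (sgn (lin_minus k) + sgn (lin_plus k)) * theta_weight \<tau> k"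

definition theta_nonhol :: "complex \<Rightarrow> int \<times> int \<Rightarrow> complex" where
  "theta_nonhol \<tau> k = - of_real (sgn (lin_minus k) * Zwegers_beta (6 * Im \<tau> * (lin_minus k)\<^sup>2)) * theta_weight \<tau> k"

lemma norm_theta_weight: "norm (theta_weight \<tau> k) = exp (- 2 * pi * Q_lat k * Im \<tau>)"
  unfolding theta_weight_def by (simp add: norm_mult norm_power_int norm_qpow)

lemma theta_weight_reflect: "theta_weight \<tau> (k1, - k2) = theta_weight \<tau> (k1, k2)"
proof -
  have "even (k1 - k2) \<longleftrightarrow> even (k1 + k2)"
    by simp
  then show ?thesis
    unfolding theta_weight_def by (simp add: power_int_minus_left)
qed

lemma lin_plus_eq_lin_minus_reflect: "lin_plus (k1, k2) = lin_minus (k1, - k2)"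
  by simp

lemma theta_ab_eq_infsum_parts:
  assumes "Im \<tau> > 0"
  shows "theta_ab \<tau> = (\<Sum>\<^sub>\<infinity>k. theta_hol \<tau> k + theta_nonhol \<tau> k + theta_nonhol \<tau> (apsnd uminus k))"
  unfolding theta_ab_def
proof (rule infsum_cong, clarify)
  fix k1 k2 :: int
  define n where "n = (real_of_int k1, real_of_int k2) + avec"
  define s where "s = sqrt (6 * Im \<tau>)"
  have E: "Eerr (s * x) = sgn x * (1 - Zwegers_beta (6 * Im \<tau> * x\<^sup>2))" for x
    using assms by (simp add: Eerr_eq_sgn_Zwegers_beta s_def sgn_mult power_mult_distrib)
  have B: "Bf c1 n = 6 * lin_minus (k1, k2)" "Bf c2 n = - (6 * lin_minus (k1, - k2))"
    and Q: "- Qf c1 = 6" "- Qf c2 = 6"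
    by (simp_all add: n_def Bf_def Qf_def c1_def c2_def avec_def power2_eq_square field_simps)
  have scale: "6 * x * sqrt (Im \<tau>) / sqrt 6 = s * x" for x
  proof -
    have "6 * x * sqrt (Im \<tau>) / sqrt 6 = 6 / sqrt 6 * sqrt (Im \<tau>) * x"
      by simp
    also have "6 / sqrt 6 = sqrt (6::real)"
      by (rule real_div_sqrt) simp
    finally show ?thesis
      by (simp add: s_def real_sqrt_mult)
  qed
  have arg: "Bf c1 n * sqrt (Im \<tau>) / sqrt (- Qf c1) = s * lin_minus (k1, k2)"
    "Bf c2 n * sqrt (Im \<tau>) / sqrt (- Qf c2) = - (s * lin_minus (k1, - k2))"
    unfolding B Q by (simp_all only: scale mult_minus_left minus_divide_left[symmetric])
  have phase: "Bf bvec n = of_int (k1 + k2) / 2 + 1/6"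
    by (simp add: n_def Bf_def Qf_def bvec_def avec_def power2_eq_square field_simps)
  have Q_n: "Qf n = Q_lat (k1, k2)"
    by (simp add: n_def Qf_def avec_def)
  show "(let n = (real_of_int k1, real_of_int k2) + avec in
       complex_of_real (Eerr (Bf c1 n * sqrt (Im \<tau>) / sqrt (- Qf c1))
                       - Eerr (Bf c2 n * sqrt (Im \<tau>) / sqrt (- Qf c2)))
       * exp (2 * complex_of_real pi * \<i> * complex_of_real (Bf bvec n))
       * qpow \<tau> (Qf n))
    = theta_hol \<tau> (k1, k2) + theta_nonhol \<tau> (k1, k2) + theta_nonhol \<tau> (apsnd uminus (k1, k2))"
    unfolding Let_def n_def[symmetric] arg phase Q_n exp_two_pi_i_half_int_add_sixth E Eerr_minus
      apsnd_conv theta_hol_def theta_nonhol_def theta_weight_reflect lin_plus_eq_lin_minus_reflect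
    by (simp add: theta_weight_def algebra_simps del: lin_minus.simps)
qed

lemma norm_theta_hol_le:
  assumes "Im \<tau> > 0"
  shows "norm (theta_hol \<tau> (k1, k2))
    \<le> 2 * exp (2 * pi * Im \<tau>) * exp (- (pi * Im \<tau>) * (\<bar>of_int k1\<bar> + \<bar>of_int k2\<bar>))"
proof (cases "0 < lin_minus (k1, k2) * lin_plus (k1, k2)")
  case False
  then have "sgn (lin_minus (k1, k2)) + sgn (lin_plus (k1, k2)) = 0"
    unfolding zero_less_mult_iff lin_minus_pos_iff lin_minus_neg_iff lin_plus_pos_iff lin_plus_neg_iff
    by (auto simp: sgn_real_def)
  then show ?thesis
    by (simp add: theta_hol_def)
next
  case True
  let ?v = "Im \<tau>" and ?A = "\<bar>of_int k1\<bar> + \<bar>of_int k2\<bar>"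
  have "norm (theta_hol \<tau> (k1, k2))
      = \<bar>sgn (lin_minus (k1, k2)) + sgn (lin_plus (k1, k2))\<bar> * exp (- 2 * pi * Q_lat (k1, k2) * ?v)"
    by (simp add: theta_hol_def norm_mult norm_theta_weight del: lin_minus.simps lin_plus.simps Q_lat.simps
        flip: of_real_add)
  also have "\<dots> \<le> 2 * exp (- 2 * pi * (?A / 2 - 1) * ?v)"
  proof (intro mult_mono)
    show "\<bar>sgn (lin_minus (k1, k2)) + sgn (lin_plus (k1, k2))\<bar> \<le> 2"
      by (simp add: sgn_real_def)
    show "exp (- 2 * pi * Q_lat (k1, k2) * ?v) \<le> exp (- 2 * pi * (?A / 2 - 1) * ?v)"
      using Q_lat_ge_of_same_sign[OF True] assms by (simp add: mult_right_mono)
  qed auto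
  also have "- 2 * pi * (?A / 2 - 1) * ?v = 2 * pi * ?v + - (pi * ?v) * ?A"
    by (simp add: field_simps)
  also have "exp \<dots> = exp (2 * pi * ?v) * exp (- (pi * ?v) * ?A)"
    by (rule exp_add)
  finally show ?thesis
    by (simp add: mult.assoc)
qed

lemma Zwegers_beta_lin_minus_le:
  assumes "v > 0"
  shows "Zwegers_beta (6 * v * (lin_minus k)\<^sup>2) \<le> exp (- pi * (6 * v * (lin_minus k)\<^sup>2)) / (pi * sqrt (2 * v / 3))"
proof -
  define y where "y = 6 * v * (lin_minus k)\<^sup>2"
  have "1/9 \<le> (lin_minus k)\<^sup>2"
    by (cases k) (simp only: lin_minus.simps sq_of_int_add_third_ge)
  then have y_ge: "2 * v / 3 \<le> y"
    using assms unfolding y_def by (simp add: mult_left_mono[of "1/9" "(lin_minus k)\<^sup>2" "6 * v", simplified])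
  have "Zwegers_beta y \<le> exp (- pi * y) / (pi * sqrt y)"
    using assms y_ge by (intro Zwegers_beta_le) linarith
  also have "\<dots> \<le> exp (- pi * y) / (pi * sqrt (2 * v / 3))"
    using assms y_ge by (intro divide_left_mono mult_left_mono) auto
  finally show ?thesis
    unfolding y_def .
qed

lemma norm_theta_nonhol_le:
  assumes "Im \<tau> > 0"
  shows "norm (theta_nonhol \<tau> (k1, k2)) \<le> exp (pi * Im \<tau> / 2) / (pi * sqrt (2 * Im \<tau> / 3))
    * exp (- (pi * Im \<tau> / 2) * (\<bar>of_int k1\<bar> + \<bar>of_int k2\<bar>))"
proof -
  let ?v = "Im \<tau>" and ?A = "\<bar>of_int k1\<bar> + \<bar>of_int k2\<bar>" and ?Q = "Q_lat (k1, k2)"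
  define d y where "d = lin_minus (k1, k2)" and "y = 6 * ?v * d\<^sup>2"
  have beta_le: "Zwegers_beta y \<le> exp (- pi * y) / (pi * sqrt (2 * ?v / 3))"
    unfolding y_def d_def using assms by (rule Zwegers_beta_lin_minus_le)
  have exp_le: "exp (- pi * y) * exp (- 2 * pi * ?Q * ?v) \<le> exp (pi * ?v / 2) * exp (- (pi * ?v / 2) * ?A)"
  proof -
    have "exp (- pi * y) * exp (- 2 * pi * ?Q * ?v) = exp (- 2 * pi * ?v * (3 * d\<^sup>2 + ?Q))"
      by (simp add: y_def exp_add[symmetric] algebra_simps)
    also have "\<dots> \<le> exp (- 2 * pi * ?v * (?A / 4 - 1/4))"
      using Q_lat_add_lin_minus_ge[of k1 k2] assms by (simp add: d_def mult_left_mono)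
    also have "- 2 * pi * ?v * (?A / 4 - 1/4) = pi * ?v / 2 + - (pi * ?v / 2) * ?A"
      by (simp add: field_simps)
    also have "exp \<dots> = exp (pi * ?v / 2) * exp (- (pi * ?v / 2) * ?A)"
      by (rule exp_add)
    finally show ?thesis .
  qed
  have "y \<ge> 0"
    using assms by (simp add: y_def)
  have "norm (theta_nonhol \<tau> (k1, k2)) = \<bar>sgn d\<bar> * Zwegers_beta y * exp (- 2 * pi * ?Q * ?v)"
    using Zwegers_beta_nonneg[OF \<open>y \<ge> 0\<close>]
    by (simp add: theta_nonhol_def norm_mult norm_theta_weight abs_mult d_def y_def
        del: lin_minus.simps Q_lat.simps)
  also have "\<dots> \<le> exp (- pi * y) / (pi * sqrt (2 * ?v / 3)) * exp (- 2 * pi * ?Q * ?v)"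
    using beta_le Zwegers_beta_nonneg[OF \<open>y \<ge> 0\<close>]
    by (intro mult_right_mono) (auto simp: sgn_real_def intro: order_trans[OF _ beta_le])
  also have "\<dots> \<le> exp (pi * ?v / 2) * exp (- (pi * ?v / 2) * ?A) / (pi * sqrt (2 * ?v / 3))"
    using exp_le assms by (simp add: divide_right_mono)
  finally show ?thesis
    by (simp only: times_divide_eq_left)
qed

lemma summable_theta_hol: "Im \<tau> > 0 \<Longrightarrow> theta_hol \<tau> summable_on UNIV"
  by (rule summable_on_int_pair_exp_bound[OF _ norm_theta_hol_le]) auto

lemma summable_theta_nonhol: "Im \<tau> > 0 \<Longrightarrow> theta_nonhol \<tau> summable_on UNIV"
  by (rule summable_on_int_pair_exp_bound[OF _ norm_theta_nonhol_le]) auto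

section \<open>The holomorphic part\<close>

fun H_term :: "complex \<Rightarrow> nat \<times> int \<Rightarrow> complex" where
  "H_term q (n, j) = (-1) ^ n * q powi (3 * int n ^ 2 + 2 * int n) * (1 + q powi (2 * int n + 1))
     * ((-1) powi j * q powi (- (j ^ 2)))"

definition H_index :: "(nat \<times> int) set" where
  "H_index = (SIGMA n:UNIV. {- int n..int n})"

lemma H_eq_suminf: "H q = (\<Sum>n. \<Sum>j\<in>{- int n..int n}. H_term q (n, j))"
  unfolding H_def by (simp add: sum_distrib_left)

lemma theta_hol_eq:
  "theta_hol \<tau> (k1, k2)
    = (if \<bar>k2\<bar> \<le> k1 then 2 else if \<bar>k2\<bar> \<le> - k1 - 1 then - 2 else 0) * theta_weight \<tau> (k1, k2)"
  using sgn_of_int_add_third[of "k1 - k2"] sgn_of_int_add_third[of "k1 + k2"]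
  by (auto simp: theta_hol_def simp del: of_int_diff of_int_add)

lemma theta_hol_pair:
  assumes "\<bar>j\<bar> \<le> int n"
  shows "theta_hol \<tau> (int n, j) + theta_hol \<tau> (- int n - 1, j)
    = 2 * zeta6 * qpow \<tau> (1/3) * H_term (exp (2 * complex_of_real pi * \<i> * \<tau>)) (n, j)"
proof -
  have Q_pos: "Q_lat (int n, j) = 1/3 + of_int (3 * int n ^ 2 + 2 * int n) + of_int (- (j ^ 2))"
    and Q_neg: "Q_lat (- int n - 1, j)
      = 1/3 + of_int (3 * int n ^ 2 + 2 * int n) + of_int (- (j ^ 2)) + of_int (2 * int n + 1)"
    by (simp_all add: power2_eq_square algebra_simps)
  have sign_pos: "(-1::complex) powi (int n + j) = (-1) ^ n * (-1) powi j"
    and sign_neg: "(-1::complex) powi (- int n - 1 + j) = - ((-1) ^ n * (-1) powi j)"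
    by (simp_all add: power_int_add power_int_diff power_int_minus_one_minus)
  show ?thesis
    using assms
    unfolding theta_hol_eq theta_weight_def fst_conv snd_conv sign_pos sign_neg Q_pos Q_neg
      qpow_add power_int_qpow[symmetric] H_term.simps
    by (simp add: algebra_simps)
qed

lemma has_sum_theta_hol_pairs:
  assumes "Im \<tau> > 0"
  shows "((\<lambda>(n, j). theta_hol \<tau> (int n, j) + theta_hol \<tau> (- int n - 1, j)) has_sum (\<Sum>\<^sub>\<infinity>k. theta_hol \<tau> k))
    H_index"
proof -
  define pos neg :: "nat \<times> int \<Rightarrow> int \<times> int"
    where "pos = (\<lambda>(n, j). (int n, j))" and "neg = (\<lambda>(n, j). (- int n - 1, j))"
  have inj: "inj_on pos H_index" "inj_on neg H_index"
    by (auto simp: pos_def neg_def inj_on_def)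
  have pos_image: "pos ` H_index = {(k1, k2). \<bar>k2\<bar> \<le> k1}"
  proof (intro equalityI subsetI)
    fix k :: "int \<times> int" assume "k \<in> {(k1, k2). \<bar>k2\<bar> \<le> k1}"
    then show "k \<in> pos ` H_index"
      by (intro rev_image_eqI[of "(nat (fst k), snd k)"]) (auto simp: pos_def H_index_def)
  qed (auto simp: pos_def H_index_def)
  have neg_image: "neg ` H_index = {(k1, k2). \<bar>k2\<bar> \<le> - k1 - 1}"
  proof (intro equalityI subsetI)
    fix k :: "int \<times> int" assume "k \<in> {(k1, k2). \<bar>k2\<bar> \<le> - k1 - 1}"
    then show "k \<in> neg ` H_index"
      by (intro rev_image_eqI[of "(nat (- fst k - 1), snd k)"]) (auto simp: neg_def H_index_def)
  qed (auto simp: neg_def H_index_def)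
  have summable: "theta_hol \<tau> summable_on A" for A
    using summable_theta_hol[OF assms] by (rule summable_on_subset_banach) simp
  have summable_pos: "(\<lambda>x. theta_hol \<tau> (pos x)) summable_on H_index"
    and summable_neg: "(\<lambda>x. theta_hol \<tau> (neg x)) summable_on H_index"
    using summable_on_reindex[OF inj(1), of "theta_hol \<tau>"] summable_on_reindex[OF inj(2), of "theta_hol \<tau>"]
      summable by (simp_all add: o_def)
  have "(\<Sum>\<^sub>\<infinity>k. theta_hol \<tau> k) = (\<Sum>\<^sub>\<infinity>k\<in>pos ` H_index \<union> neg ` H_index. theta_hol \<tau> k)"
    by (rule infsum_cong_neutral) (auto simp: pos_image neg_image theta_hol_eq)
  also have "\<dots> = (\<Sum>\<^sub>\<infinity>k\<in>pos ` H_index. theta_hol \<tau> k) + (\<Sum>\<^sub>\<infinity>k\<in>neg ` H_index. theta_hol \<tau> k)"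
    by (rule infsum_Un_disjoint[OF summable summable]) (auto simp: pos_image neg_image)
  also have "\<dots> = (\<Sum>\<^sub>\<infinity>x\<in>H_index. theta_hol \<tau> (pos x)) + (\<Sum>\<^sub>\<infinity>x\<in>H_index. theta_hol \<tau> (neg x))"
    using inj by (simp add: infsum_reindex o_def)
  also have "\<dots> = (\<Sum>\<^sub>\<infinity>x\<in>H_index. theta_hol \<tau> (pos x) + theta_hol \<tau> (neg x))"
    using summable_pos summable_neg by (rule infsum_add[symmetric])
  finally have "((\<lambda>x. theta_hol \<tau> (pos x) + theta_hol \<tau> (neg x)) has_sum (\<Sum>\<^sub>\<infinity>k. theta_hol \<tau> k)) H_index"
    using has_sum_infsum[OF summable_on_add[OF summable_pos summable_neg]] by simp
  then show ?thesis
    by (simp add: pos_def neg_def case_prod_unfold)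
qed

lemma infsum_theta_hol:
  assumes "Im \<tau> > 0"
  shows "(\<Sum>\<^sub>\<infinity>k. theta_hol \<tau> k) = 2 * zeta6 * qpow \<tau> (1/3) * H (exp (2 * complex_of_real pi * \<i> * \<tau>))"
proof -
  define C q where "C = 2 * zeta6 * qpow \<tau> (1/3)" and "q = exp (2 * complex_of_real pi * \<i> * \<tau>)"
  have "C \<noteq> 0"
    by (simp add: C_def zeta6_def qpow_def)
  have "((\<lambda>x. C * H_term q x) has_sum (\<Sum>\<^sub>\<infinity>k. theta_hol \<tau> k)) H_index"
    using has_sum_theta_hol_pairs[OF assms]
    by (rule has_sum_cong[THEN iffD1, rotated]) (auto simp: H_index_def C_def q_def theta_hol_pair)
  then have "(H_term q has_sum (\<Sum>\<^sub>\<infinity>k. theta_hol \<tau> k) / C) H_index"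
    using has_sum_cmult_right_iff[OF \<open>C \<noteq> 0\<close>] by blast
  then have "(\<lambda>n. \<Sum>j\<in>{- int n..int n}. H_term q (n, j)) sums ((\<Sum>\<^sub>\<infinity>k. theta_hol \<tau> k) / C)"
    unfolding H_index_def by (rule has_sum_Sigma_finite_imp_sums) simp
  then have "H q = (\<Sum>\<^sub>\<infinity>k. theta_hol \<tau> k) / C"
    unfolding H_eq_suminf by (simp add: sums_iff)
  with \<open>C \<noteq> 0\<close> show ?thesis
    unfolding C_def q_def by (simp add: field_simps)
qed

section \<open>The non-holomorphic part\<close>

definition Hminus_term :: "complex \<Rightarrow> int \<Rightarrow> int \<times> int \<Rightarrow> complex" where
  "Hminus_term \<tau> \<epsilon> = (\<lambda>(n, r).
     complex_of_real (sgn (2 * of_int r + of_int \<epsilon> + 1/3)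
       * Gamma_inc (1/2) (6 * pi * (2 * of_int r + of_int \<epsilon> + 1/3)\<^sup>2 * Im \<tau>))
     * qpow \<tau> (- 3/2 * (2 * of_int r + of_int \<epsilon> + 1/3)\<^sup>2 + 1/2 * (2 * of_int n + of_int \<epsilon> + 1)\<^sup>2))"

lemma Hminus_eq_sum_infsum:
  "Hminus \<tau> = - (1 / complex_of_real (sqrt pi))
     * (\<Sum>\<epsilon>\<in>{0::int, 1}. (-1) powi \<epsilon> * (\<Sum>\<^sub>\<infinity>x. Hminus_term \<tau> \<epsilon> x))"
  unfolding Hminus_def Hminus_term_def ..

definition Hminus_index :: "int \<times> int \<times> int \<Rightarrow> int \<times> int" where
  "Hminus_index = (\<lambda>(\<epsilon>, n, r). (n - r, n - 3 * r - \<epsilon>))"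

lemma bij_betw_Hminus_index: "bij_betw Hminus_index ({0, 1} \<times> UNIV) UNIV"
proof (rule bij_betwI[where g = "\<lambda>(k1::int, k2). ((k1 - k2) mod 2, k1 + (k1 - k2) div 2, (k1 - k2) div 2)"])
  show "(\<lambda>(k1::int, k2). ((k1 - k2) mod 2, k1 + (k1 - k2) div 2, (k1 - k2) div 2)) \<in> UNIV \<rightarrow> {0, 1} \<times> UNIV"
    by auto
  fix x :: "int \<times> int \<times> int"
  assume "x \<in> {0, 1} \<times> UNIV"
  then show "(\<lambda>(k1::int, k2). ((k1 - k2) mod 2, k1 + (k1 - k2) div 2, (k1 - k2) div 2)) (Hminus_index x) = x"
    by (auto simp: Hminus_index_def)
next
  fix k :: "int \<times> int"
  show "Hminus_index ((\<lambda>(k1::int, k2). ((k1 - k2) mod 2, k1 + (k1 - k2) div 2, (k1 - k2) div 2)) k) = k"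
    by (cases k) (simp add: Hminus_index_def, presburger)
qed auto

lemma theta_nonhol_Hminus_index:
  "theta_nonhol \<tau> (Hminus_index (\<epsilon>, x))
    = - (zeta6 * (-1) powi \<epsilon> / complex_of_real (sqrt pi)) * Hminus_term \<tau> \<epsilon> x"
proof -
  obtain n r where x: "x = (n, r)"
    by (cases x)
  define m where "m = 2 * real_of_int r + of_int \<epsilon> + 1/3"
  have lin: "lin_minus (n - r, n - 3 * r - \<epsilon>) = m"
    by (simp add: m_def)
  have Q: "Q_lat (n - r, n - 3 * r - \<epsilon>) = - 3/2 * m\<^sup>2 + 1/2 * (2 * of_int n + of_int \<epsilon> + 1)\<^sup>2"
    by (simp add: m_def power2_eq_square field_simps)
  have sign: "(-1::complex) powi (n - r + (n - 3 * r - \<epsilon>)) = (-1) powi \<epsilon>"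
  proof -
    have "even (n - r + (n - 3 * r - \<epsilon>)) \<longleftrightarrow> even \<epsilon>"
      by presburger
    then show ?thesis
      by (simp add: power_int_minus_left)
  qed
  have beta: "Zwegers_beta (6 * Im \<tau> * m\<^sup>2) = Gamma_inc (1/2) (6 * pi * m\<^sup>2 * Im \<tau>) / sqrt pi"
    by (simp add: Zwegers_beta_def mult_ac)
  have "Hminus_term \<tau> \<epsilon> (n, r) = complex_of_real (sgn m * Gamma_inc (1/2) (6 * pi * m\<^sup>2 * Im \<tau>))
      * qpow \<tau> (- 3/2 * m\<^sup>2 + 1/2 * (2 * of_int n + of_int \<epsilon> + 1)\<^sup>2)"
    unfolding Hminus_term_def m_def by simp
  then show ?thesis
    unfolding x Hminus_index_def prod.case theta_nonhol_def theta_weight_def fst_conv snd_conv lin Q sign beta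
    by (simp add: field_simps)
qed

lemma infsum_theta_nonhol:
  assumes "Im \<tau> > 0"
  shows "(\<Sum>\<^sub>\<infinity>k. theta_nonhol \<tau> k) = zeta6 * Hminus \<tau>"
proof -
  have summable: "(\<lambda>x. theta_nonhol \<tau> (Hminus_index x)) summable_on {0, 1} \<times> UNIV"
    using summable_theta_nonhol[OF assms] by (simp add: summable_on_reindex_bij_betw[OF bij_betw_Hminus_index])
  have "(\<Sum>\<^sub>\<infinity>k. theta_nonhol \<tau> k) = (\<Sum>\<^sub>\<infinity>x\<in>{0, 1} \<times> UNIV. theta_nonhol \<tau> (Hminus_index x))"
    by (rule infsum_reindex_bij_betw[OF bij_betw_Hminus_index, symmetric])
  also have "\<dots> = (\<Sum>\<^sub>\<infinity>\<epsilon>\<in>{0, 1}. \<Sum>\<^sub>\<infinity>x. theta_nonhol \<tau> (Hminus_index (\<epsilon>, x)))"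
    using summable by (rule infsum_Sigma_banach[symmetric])
  also have "\<dots> = (\<Sum>\<epsilon>\<in>{0, 1}. - (zeta6 * (-1) powi \<epsilon> / complex_of_real (sqrt pi))
      * (\<Sum>\<^sub>\<infinity>x. Hminus_term \<tau> \<epsilon> x))"
    by (simp only: theta_nonhol_Hminus_index infsum_cmult_right' infsum_finite finite_insert finite.emptyI)
  also have "\<dots> = zeta6 * Hminus \<tau>"
    unfolding Hminus_eq_sum_infsum by (simp add: field_simps)
  finally show ?thesis .
qed

theorem proposition3p1:
  fixes \<tau> :: complex
  assumes "Im \<tau> > 0"
  shows "Hhat \<tau> = exp (- complex_of_real pi * \<i> / 3) / 2 * theta_ab \<tau>"
proof -
  have summable_reflect: "(\<lambda>k. theta_nonhol \<tau> (apsnd uminus k)) summable_on UNIV"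
    using summable_theta_nonhol[OF assms] by (simp add: summable_on_reindex_bij_betw[OF bij_apsnd_uminus])
  have "theta_ab \<tau> = (\<Sum>\<^sub>\<infinity>k. theta_hol \<tau> k + theta_nonhol \<tau> k + theta_nonhol \<tau> (apsnd uminus k))"
    by (rule theta_ab_eq_infsum_parts[OF assms])
  also have "\<dots> = (\<Sum>\<^sub>\<infinity>k. theta_hol \<tau> k) + (\<Sum>\<^sub>\<infinity>k. theta_nonhol \<tau> k)
      + (\<Sum>\<^sub>\<infinity>k. theta_nonhol \<tau> (apsnd uminus k))"
    using summable_theta_hol[OF assms] summable_theta_nonhol[OF assms] summable_reflect
    by (simp add: infsum_add summable_on_add)
  also have "(\<Sum>\<^sub>\<infinity>k. theta_nonhol \<tau> (apsnd uminus k)) = (\<Sum>\<^sub>\<infinity>k. theta_nonhol \<tau> k)"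
    by (rule infsum_reindex_bij_betw[OF bij_apsnd_uminus])
  also have "(\<Sum>\<^sub>\<infinity>k. theta_hol \<tau> k) + (\<Sum>\<^sub>\<infinity>k. theta_nonhol \<tau> k) + (\<Sum>\<^sub>\<infinity>k. theta_nonhol \<tau> k)
      = 2 * zeta6 * Hhat \<tau>"
    unfolding infsum_theta_hol[OF assms] infsum_theta_nonhol[OF assms] Hhat_def by (simp add: algebra_simps)
  finally have "theta_ab \<tau> = 2 * zeta6 * Hhat \<tau>" .
  moreover have "exp (- complex_of_real pi * \<i> / 3) * zeta6 = 1"
    by (simp add: zeta6_def exp_add[symmetric])
  ultimately show ?thesis
    by (simp add: field_simps)
qed

end
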